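(* Let $U\neq0$, $2\le k<\lfloor L/2\rfloor$, and let $F_k$ be a $k$-local conserved quantity of the one-dimensional Hubbard model. For $\sigma,\mu\in\{\uparrow,\downarrow\}$ and $s\in\{+,-\}$, let $q_i^{\sigma,s;\mu,s}$ denote the $k$-support basis element starting at site $i$ whose only non-identity factors are $e_{i,\sigma}=c^{s}_{i,\sigma}$ and $e_{i+k-1,\mu}=c^{s}_{i+k-1,\mu}$, where $c^+=c^\dagger$, $c^-=c$, and let $d_i$ be its coefficient in $F_k$. If $L$ is odd then $d_i=0$ for all $i$; if $L$ is even then there is a constant $d$ with $d_i=d\,(-1)^i$ for all $i$.
   Context: Fermionic operators $c_{j,\sigma},c^\dagger_{j,\sigma}$, $j\in\{1,\dots,L\}$ with indices modulo $L$ (periodic boundary conditions), $\sigma\in\{\uparrow,\downarrow\}$, with canonical anticommutation relations; $n_{j,\sigma}=c^\dagger_{j,\sigma}c_{j,\sigma}$, $z_{j,\sigma}=2n_{j,\sigma}-1$. Hubbard Hamiltonian: $H=-2\sum_j\sum_\sigma(c^\dagger_{j,\sigma}c_{j+1,\sigma}+c^\dagger_{j+1,\sigma}c_{j,\sigma})+4U\sum_j(n_{j,\uparrow}-\tfrac12)(n_{j,\downarrow}-\tfrac12)$. An $l$-support basis element starting at site $i$ is $(e_{i,\uparrow}\cdots e_{i+l-1,\uparrow})(e_{i,\downarrow}\cdots e_{i+l-1,\downarrow})$ (in exactly this operator order) with $e_{j,\sigma}\in\{c_{j,\sigma},c^\dagger_{j,\sigma},z_{j,\sigma},I\}$, $(e_{i,\uparrow},e_{i,\downarrow})\neq(I,I)$,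 $(e_{i+l-1,\uparrow},e_{i+l-1,\downarrow})\neq(I,I)$. A $k$-local conserved quantity is $F_k=\sum_{l=1}^k\sum_{i=1}^L\sum_e c_e\,e$ (inner sum over $l$-support basis elements starting at $i$) with $[F_k,H]=0$ and some nonzero coefficient on a $k$-support basis element. *)

theory Defs
  imports Complex_Main
begin

text \<open>Sites are 0..L-1 (site j of the
paper, j in 1..L, is j mod L). A mode is (site, spin) with spin True = up, False = down.
Fock basis states are sets of occupied modes. Operators are matrices indexed by
Fock basis states; all primitive operators vanish outside the Fock basis.\<close>

type_synonym mode = "nat \<times> bool"
type_synonym op = "mode set \<Rightarrow> mode set \<Rightarrow> complex"

definition modes :: "nat \<Rightarrow> mode set" where
  "modes L = {0..<L} \<times> (UNIV :: bool set)"

definition states :: "nat \<Rightarrow> mode set set" where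
  "states L = Pow (modes L)"

definition jw :: "mode \<Rightarrow> nat" where
  "jw m = 2 * fst m + (if snd m then 0 else 1)"

definition jwsign :: "mode \<Rightarrow> mode set \<Rightarrow> complex" where
  "jwsign m y = (-1) ^ card {m' \<in> y. jw m' < jw m}"

definition idop :: "nat \<Rightarrow> op" where
  "idop L x y = (if x \<in> states L \<and> x = y then 1 else 0)"

definition ann :: "nat \<Rightarrow> mode \<Rightarrow> op" where
  "ann L m x y = (if x \<in> states L \<and> y \<in> states L \<and> m \<in> y \<and> x = y - {m}
                  then jwsign m y else 0)"

definition cre :: "nat \<Rightarrow> mode \<Rightarrow> op" where
  "cre L m x y = (if x \<in> states L \<and> y \<in> states L \<and> m \<notin> y \<and> x = insert m y
                  then jwsign m y else 0)"

definition opmult :: "nat \<Rightarrow> op \<Rightarrow> op \<Rightarrow> op" where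
  "opmult L A B x y = (\<Sum>z\<in>states L. A x z * B z y)"

definition opadd :: "op \<Rightarrow> op \<Rightarrow> op" where
  "opadd A B x y = A x y + B x y"

definition opsmult :: "complex \<Rightarrow> op \<Rightarrow> op" where
  "opsmult a A x y = a * A x y"

definition numop :: "nat \<Rightarrow> mode \<Rightarrow> op" where
  "numop L m = opmult L (cre L m) (ann L m)"

definition zop :: "nat \<Rightarrow> mode \<Rightarrow> op" where
  "zop L m = opadd (opsmult 2 (numop L m)) (opsmult (-1) (idop L))"

definition oplist :: "nat \<Rightarrow> op list \<Rightarrow> op" where
  "oplist L ops = foldr (opmult L) ops (idop L)"

definition site :: "nat \<Rightarrow> nat \<Rightarrow> nat" where
  "site L j = j mod L"

definition hub :: "nat \<Rightarrow> real \<Rightarrow> op" where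
  "hub L U x y =
     -2 * (\<Sum>j\<in>{1..L}. \<Sum>\<sigma>\<in>(UNIV::bool set).
            opmult L (cre L (site L j, \<sigma>)) (ann L (site L (j+1), \<sigma>)) x y
          + opmult L (cre L (site L (j+1), \<sigma>)) (ann L (site L j, \<sigma>)) x y)
     + 4 * complex_of_real U * (\<Sum>j\<in>{1..L}.
            opmult L (opadd (numop L (site L j, True)) (opsmult (-1/2) (idop L)))
                     (opadd (numop L (site L j, False)) (opsmult (-1/2) (idop L))) x y)"

datatype fac = FI | FC | FD | FZ

definition facop :: "nat \<Rightarrow> fac \<Rightarrow> mode \<Rightarrow> op" where
  "facop L f m = (case f of FI \<Rightarrow> idop L | FC \<Rightarrow> ann L m | FD \<Rightarrow> cre L m | FZ \<Rightarrow> zop L m)"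

text \<open>A configuration of length l is the list of pairs (e_{i+r,up}, e_{i+r,down}), r = 0..l-1.
The basis element is (e_{i,up} ... e_{i+l-1,up})(e_{i,down} ... e_{i+l-1,down}).\<close>
definition belem :: "nat \<Rightarrow> nat \<Rightarrow> (fac \<times> fac) list \<Rightarrow> op" where
  "belem L i cfg = opmult L
     (oplist L (map (\<lambda>r. facop L (fst (cfg ! r)) (site L (i + r), True)) [0..<length cfg]))
     (oplist L (map (\<lambda>r. facop L (snd (cfg ! r)) (site L (i + r), False)) [0..<length cfg]))"

definition cfgs :: "nat \<Rightarrow> (fac \<times> fac) list set" where
  "cfgs l = {cfg. length cfg = l \<and> 1 \<le> l \<and> hd cfg \<noteq> (FI, FI) \<and> last cfg \<noteq> (FI, FI)}"

definition Fk :: "nat \<Rightarrow> nat \<Rightarrow> (nat \<Rightarrow> nat \<Rightarrow> (fac \<times> fac) list \<Rightarrow> complex) \<Rightarrow> op" where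
  "Fk L k coef x y = (\<Sum>l\<in>{1..k}. \<Sum>i\<in>{1..L}. \<Sum>cfg\<in>cfgs l. coef l i cfg * belem L i cfg x y)"

text \<open>The configuration of q_i^{sigma,s;mu,s}: c^s at (i,sigma), c^s at (i+k-1,mu), identity
elsewhere. s = True means c^+ = c^dagger, s = False means c^- = c.\<close>
definition qcfg :: "nat \<Rightarrow> bool \<Rightarrow> bool \<Rightarrow> bool \<Rightarrow> (fac \<times> fac) list" where
  "qcfg k \<sigma> \<mu> s =
     (let f = (if s then FD else FC) in
      (if \<sigma> then (f, FI) else (FI, f)) # replicate (k - 2) (FI, FI)
        @ [if \<mu> then (f, FI) else (FI, f)])"

end

theory Submission
  imports Defs
begin

text \<open>
  Pair operators by the bilinear form tr (A^T B). Distinct basis elements are orthogonal for it: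
  their matrices are supported on pairs of Fock states differing by exactly the created and
  annihilated modes, and the z factors average out over the remaining modes. So pairing F_k with
  q_w reads off d_w, up to a nonzero constant and the sign caused by ordering the up spins first.

  Now pair [F_k, H] = 0 with c^s_{w,\<sigma>} c^s_{w+k,\<mu>}, which is orthogonal to F_k because its
  range exceeds k. Moving the commutator across the pairing gives the pairing of F_k with
  [c^s_{w,\<sigma>} c^s_{w+k,\<mu>}, H]. The interaction part of H is diagonal and drops out, and each hopping term moves one of the two
  ladder operators by one site. Only the two moves that shorten the range to k survive, and they
  give d_w + d_{w+1} = 0. Hence d_w = (-1)^w d_0, and periodicity forces d_0 = 0 when L is odd.
\<close>

section \<open>Fock-space operators\<close>

definition fock_op :: "nat \<Rightarrow> op \<Rightarrow> bool" where
  "fock_op L A \<longleftrightarrow> (\<forall>x y. A x y \<noteq> 0 \<longrightarrow> x \<in> states L \<and> y \<in> states L)"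

lemma finite_modes: "finite (modes L)"
  unfolding modes_def by auto

lemma finite_states: "finite (states L)"
  unfolding states_def by (simp add: finite_modes)

lemma finite_state: "x \<in> states L \<Longrightarrow> finite x"
  unfolding states_def using finite_modes finite_subset by auto

lemma card_modes: "card (modes L) = 2 * L"
  unfolding modes_def by (simp add: card_cartesian_product)

lemma sum_eq_single:
  assumes "finite S" "\<And>z. z \<in> S \<Longrightarrow> z \<noteq> c \<Longrightarrow> f z = 0"
  shows "sum f S = (if c \<in> S then f c else 0)"
proof -
  have "sum f S = (\<Sum>z\<in>S. if z = c then f c else 0)"
    using assms(2) by (intro sum.cong) auto
  then show ?thesis using assms(1) by simp
qed

lemma jw_inj: "jw a = jw b \<Longrightarrow> a = b"
  unfolding jw_def by (cases a; cases b) (auto split: if_splits; presburger)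

lemma jwsign_insert:
  assumes "finite y" "b \<notin> y"
  shows "jwsign a (insert b y) = (if jw b < jw a then -1 else 1) * jwsign a y"
proof (cases "jw b < jw a")
  case True
  then have "{m \<in> insert b y. jw m < jw a} = insert b {m \<in> y. jw m < jw a}" by auto
  then show ?thesis using True assms unfolding jwsign_def by simp
next
  case False
  then have "{m \<in> insert b y. jw m < jw a} = {m \<in> y. jw m < jw a}" by auto
  then show ?thesis using False unfolding jwsign_def by simp
qed

lemma jwsign_insert_self: "jwsign m (insert m x) = jwsign m x"
proof -
  have "{m' \<in> insert m x. jw m' < jw m} = {m' \<in> x. jw m' < jw m}" by auto
  then show ?thesis by (simp add: jwsign_def)
qed

lemma jwsign_remove_self: "jwsign m (x - {m}) = jwsign m x"
  by (metis insert_Diff_single jwsign_insert_self)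

lemma jwsign_square: "jwsign a y * jwsign a y = 1"
  unfolding jwsign_def by (simp add: power_mult_distrib[symmetric])

lemma opmult_assoc: "opmult L (opmult L A B) C = opmult L A (opmult L B C)"
  unfolding opmult_def
  by (intro ext) (simp add: sum_distrib_left sum_distrib_right mult.assoc, rule sum.swap)

lemma opmult_add_left:
  "opmult L (\<lambda>x y. A x y + B x y) C = (\<lambda>x y. opmult L A C x y + opmult L B C x y)"
  unfolding opmult_def by (simp add: algebra_simps sum.distrib)

lemma opmult_add_right:
  "opmult L A (\<lambda>x y. B x y + C x y) = (\<lambda>x y. opmult L A B x y + opmult L A C x y)"
  unfolding opmult_def by (simp add: algebra_simps sum.distrib)

lemma opmult_diff_left:
  "opmult L (\<lambda>x y. A x y - B x y) C = (\<lambda>x y. opmult L A C x y - opmult L B C x y)"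
  unfolding opmult_def by (simp add: algebra_simps sum_subtractf)

lemma opmult_diff_right:
  "opmult L A (\<lambda>x y. B x y - C x y) = (\<lambda>x y. opmult L A B x y - opmult L A C x y)"
  unfolding opmult_def by (simp add: algebra_simps sum_subtractf)

lemma opmult_scale_left: "opmult L (\<lambda>x y. c * A x y) B = (\<lambda>x y. c * opmult L A B x y)"
  unfolding opmult_def by (simp add: algebra_simps sum_distrib_left)

lemma opmult_scale_right: "opmult L A (\<lambda>x y. c * B x y) = (\<lambda>x y. c * opmult L A B x y)"
  unfolding opmult_def by (simp add: algebra_simps sum_distrib_left)

lemma opmult_if_left:
  "opmult L (\<lambda>x y. if c then A x y else 0) B = (if c then opmult L A B else (\<lambda>x y. 0))"
  unfolding opmult_def by (cases c) (simp_all add: eta_contract_eq)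

lemma opmult_if_right:
  "opmult L A (\<lambda>x y. if c then B x y else 0) = (if c then opmult L A B else (\<lambda>x y. 0))"
  unfolding opmult_def by (cases c) (simp_all add: eta_contract_eq)

lemma opmult_zero_left: "opmult L (\<lambda>x y. 0) B = (\<lambda>x y. 0)"
  unfolding opmult_def by simp

lemma opmult_zero_right: "opmult L A (\<lambda>x y. 0) = (\<lambda>x y. 0)"
  unfolding opmult_def by simp

lemma opmult_sum_left:
  "opmult L (\<lambda>x y. \<Sum>j\<in>J. A j x y) B = (\<lambda>x y. \<Sum>j\<in>J. opmult L (A j) B x y)"
  unfolding opmult_def by (intro ext) (simp add: sum_distrib_right, rule sum.swap)

lemma opmult_sum_right:
  "opmult L A (\<lambda>x y. \<Sum>j\<in>J. B j x y) = (\<lambda>x y. \<Sum>j\<in>J. opmult L A (B j) x y)"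
  unfolding opmult_def by (intro ext) (simp add: sum_distrib_left, rule sum.swap)

lemma fock_opmult: "fock_op L A \<Longrightarrow> fock_op L B \<Longrightarrow> fock_op L (opmult L A B)"
  unfolding fock_op_def opmult_def by (metis (mono_tags, lifting) mult_eq_0_iff sum.neutral)

lemma fock_idop: "fock_op L (idop L)"
  unfolding fock_op_def idop_def by auto

lemma fock_cre: "fock_op L (cre L m)"
  unfolding fock_op_def cre_def by auto

lemma fock_ann: "fock_op L (ann L m)"
  unfolding fock_op_def ann_def by auto

lemma opmult_idop_left: "fock_op L B \<Longrightarrow> opmult L (idop L) B = B"
  unfolding opmult_def idop_def fock_op_def
  by (intro ext, subst sum_eq_single) (auto simp: finite_states)

lemma opmult_idop_right: "fock_op L A \<Longrightarrow> opmult L A (idop L) = A"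
  unfolding opmult_def idop_def fock_op_def
  by (intro ext, subst sum_eq_single) (auto simp: finite_states)

lemma opmult_cre_right:
  "opmult L A (cre L m) x y =
     (if insert m y \<in> states L \<and> y \<in> states L \<and> m \<notin> y then A x (insert m y) * jwsign m y else 0)"
  unfolding opmult_def by (subst sum_eq_single[where c="insert m y"]) (auto simp: finite_states cre_def)

lemma opmult_ann_right:
  "opmult L A (ann L m) x y =
     (if y - {m} \<in> states L \<and> y \<in> states L \<and> m \<in> y then A x (y - {m}) * jwsign m y else 0)"
  unfolding opmult_def by (subst sum_eq_single[where c="y - {m}"]) (auto simp: finite_states ann_def)

lemma numop_eq: "numop L m x y = (if x \<in> states L \<and> m \<in> x \<and> x = y then 1 else 0)"
proof (cases "y \<in> states L \<and> m \<in> y")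
  case True
  then have "y - {m} \<in> states L" by (auto simp: states_def)
  then show ?thesis unfolding numop_def opmult_ann_right using True
    by (auto simp: cre_def jwsign_remove_self jwsign_square insert_absorb)
qed (auto simp: numop_def opmult_ann_right)

definition optrans :: "op \<Rightarrow> op" where
  "optrans A x y = A y x"

lemma optrans_optrans [simp]: "optrans (optrans A) = A"
  by (intro ext) (simp add: optrans_def)

lemma optrans_opmult: "optrans (opmult L A B) = opmult L (optrans B) (optrans A)"
  by (intro ext) (simp add: optrans_def opmult_def mult.commute)

lemma optrans_cre: "optrans (cre L m) = ann L m"
proof (intro ext)
  fix x y
  show "optrans (cre L m) x y = ann L m x y"
  proof (cases "m \<in> y \<and> x = y - {m}")
    case True
    then show ?thesis unfolding optrans_def cre_def ann_def by (auto simp: jwsign_remove_self insert_absorb)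
  qed (auto simp: optrans_def cre_def ann_def)
qed

lemma optrans_ann: "optrans (ann L m) = cre L m"
  by (metis optrans_cre optrans_optrans)

section \<open>Anticommutators and commutators with hopping terms\<close>

definition opcomm :: "nat \<Rightarrow> op \<Rightarrow> op \<Rightarrow> op" where
  "opcomm L A B = (\<lambda>x y. opmult L A B x y - opmult L B A x y)"

definition opacomm :: "nat \<Rightarrow> op \<Rightarrow> op \<Rightarrow> op" where
  "opacomm L A B = (\<lambda>x y. opmult L A B x y + opmult L B A x y)"

lemma opacomm_cre_cre: "opacomm L (cre L a) (cre L b) = (\<lambda>x y. 0)"
proof (intro ext)
  fix x y
  show "opacomm L (cre L a) (cre L b) x y = 0"
  proof (cases "x \<in> states L \<and> y \<in> states L \<and> a \<notin> y \<and> b \<notin> y \<and> a \<noteq> b \<and> x = insert a (insert b y)")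
    case True
    then have "finite y" "jw a \<noteq> jw b" using finite_state jw_inj by blast+
    moreover have "insert b y \<in> states L" "insert a y \<in> states L"
      using True by (auto simp: states_def)
    ultimately show ?thesis
      using True unfolding opacomm_def opmult_cre_right
      by (auto simp: cre_def insert_commute jwsign_insert)
  next
    case False
    then show ?thesis
      unfolding opacomm_def opmult_cre_right by (auto simp: cre_def insert_commute)
  qed
qed

lemma opacomm_ann_ann: "opacomm L (ann L a) (ann L b) = (\<lambda>x y. 0)"
proof (intro ext)
  fix x y
  have "opacomm L (ann L a) (ann L b) x y = opacomm L (cre L b) (cre L a) y x"
    unfolding opacomm_def by (metis optrans_ann optrans_def optrans_opmult)
  then show "opacomm L (ann L a) (ann L b) x y = 0" by (simp add: opacomm_cre_cre)
qed

lemma opacomm_ann_cre: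
  assumes "a \<in> modes L"
  shows "opacomm L (ann L a) (cre L b) = (\<lambda>x y. if a = b then idop L x y else 0)"
proof (intro ext)
  fix x y
  show "opacomm L (ann L a) (cre L b) x y = (if a = b then idop L x y else 0)"
  proof (cases "a = b")
    case True
    show ?thesis
    proof (cases "y \<in> states L")
      case y: True
      have "finite y" using y finite_state by blast
      moreover have "insert a y \<in> states L" "y - {a} \<in> states L" using y assms by (auto simp: states_def)
      ultimately show ?thesis
        using True y unfolding opacomm_def opmult_cre_right opmult_ann_right
        by (auto simp: ann_def cre_def idop_def jwsign_square jwsign_insert_self
                       jwsign_remove_self insert_absorb)
    qed (auto simp: True opacomm_def opmult_cre_right opmult_ann_right idop_def)
  next
    case False
    show ?thesis
    proof (cases "x \<in> states L \<and> y \<in> states L \<and> a \<in> y \<and> b \<notin> y \<and> x = insert b y - {a}")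
      case c: True
      then have "finite y" "jw a \<noteq> jw b" using False finite_state jw_inj by blast+
      moreover have "insert b y \<in> states L" "y - {a} \<in> states L" using c by (auto simp: states_def)
      moreover have "jwsign a y = (if jw b < jw a then -1 else 1) * jwsign a (insert b y)"
        using jwsign_insert[of y b a] c \<open>finite y\<close> by (simp add: jwsign_square)
      moreover have "jwsign b y = (if jw a < jw b then -1 else 1) * jwsign b (y - {a})"
        using jwsign_insert[of "y - {a}" a b] c \<open>finite y\<close> by (simp add: insert_absorb)
      ultimately show ?thesis
        using c False unfolding opacomm_def opmult_cre_right opmult_ann_right
        by (auto simp: ann_def cre_def insert_Diff_if)
    next
      case c: False
      then show ?thesis
        using False unfolding opacomm_def opmult_cre_right opmult_ann_right
        by (auto simp: ann_def cre_def)
    qed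
  qed
qed

lemma opacomm_commute: "opacomm L A B = opacomm L B A"
  unfolding opacomm_def by (simp add: add.commute)

lemma opcomm_opmult_left:
  "opcomm L (opmult L X Y) H = (\<lambda>x y. opmult L X (opcomm L Y H) x y + opmult L (opcomm L X H) Y x y)"
  unfolding opcomm_def opmult_diff_left opmult_diff_right opmult_assoc by simp

lemma opcomm_opmult_right:
  "opcomm L X (opmult L C D) = (\<lambda>x y. opmult L (opacomm L X C) D x y - opmult L C (opacomm L X D) x y)"
  unfolding opcomm_def opacomm_def opmult_add_left opmult_add_right opmult_assoc by simp

lemma opcomm_opadd_right: "opcomm L X (opadd A B) = (\<lambda>x y. opcomm L X A x y + opcomm L X B x y)"
  unfolding opcomm_def opadd_def opmult_add_left opmult_add_right by (simp add: algebra_simps)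

lemma opcomm_lincomb_right:
  "opcomm L A (\<lambda>x y. a * X x y + b * Y x y) = (\<lambda>x y. a * opcomm L A X x y + b * opcomm L A Y x y)"
  unfolding opcomm_def opmult_add_left opmult_add_right opmult_scale_left opmult_scale_right
  by (simp add: algebra_simps)

lemma opcomm_sum_right:
  "opcomm L A (\<lambda>x y. \<Sum>j\<in>J. X j x y) = (\<lambda>x y. \<Sum>j\<in>J. opcomm L A (X j) x y)"
  unfolding opcomm_def opmult_sum_left opmult_sum_right by (simp add: sum_subtractf)

definition hop :: "nat \<Rightarrow> mode \<Rightarrow> mode \<Rightarrow> op" where
  "hop L a b = opmult L (cre L a) (ann L b)"

definition hopsym :: "nat \<Rightarrow> mode \<Rightarrow> mode \<Rightarrow> op" where
  "hopsym L a b = opadd (hop L a b) (hop L b a)"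

definition ladder :: "nat \<Rightarrow> bool \<Rightarrow> mode \<Rightarrow> op" where
  "ladder L s m = (if s then cre L m else ann L m)"

definition ladder_pair :: "nat \<Rightarrow> bool \<Rightarrow> mode \<Rightarrow> mode \<Rightarrow> op" where
  "ladder_pair L s u v = opmult L (ladder L s u) (ladder L s v)"

lemma opcomm_ann_hop:
  assumes "R \<in> modes L"
  shows "opcomm L (ann L R) (hop L a b) = (\<lambda>x y. if a = R then ann L b x y else 0)"
  unfolding hop_def opcomm_opmult_right opacomm_ann_ann opacomm_ann_cre[OF assms]
  by (auto simp: opmult_if_left opmult_zero_left opmult_zero_right opmult_idop_left[OF fock_ann])

lemma opcomm_cre_hop:
  assumes "b \<in> modes L"
  shows "opcomm L (cre L R) (hop L a b) = (\<lambda>x y. if b = R then - cre L a x y else 0)"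
  unfolding hop_def opcomm_opmult_right opacomm_cre_cre
    opacomm_commute[of L "cre L R" "ann L b"] opacomm_ann_cre[OF assms]
  by (auto simp: opmult_if_right opmult_zero_left opmult_zero_right opmult_idop_right[OF fock_cre])

lemma opcomm_ladder_hopsym:
  assumes "a \<in> modes L" "b \<in> modes L" "R \<in> modes L"
  shows "opcomm L (ladder L s R) (hopsym L a b) = (\<lambda>x y. (if s then -1 else 1) *
           ((if a = R then ladder L s b x y else 0) + (if b = R then ladder L s a x y else 0)))"
  unfolding hopsym_def opcomm_opadd_right ladder_def
  by (cases s) (auto simp: opcomm_ann_hop opcomm_cre_hop assms add.commute intro!: ext)

lemma opcomm_ladder_pair_hopsym:
  assumes "a \<in> modes L" "b \<in> modes L" "P \<in> modes L" "R \<in> modes L"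
  shows "opcomm L (ladder_pair L s P R) (hopsym L a b) = (\<lambda>x y. (if s then -1 else 1) *
           ((if a = R then ladder_pair L s P b x y else 0) + (if b = R then ladder_pair L s P a x y else 0)
          + (if a = P then ladder_pair L s b R x y else 0) + (if b = P then ladder_pair L s a R x y else 0)))"
  unfolding ladder_pair_def opcomm_opmult_left opcomm_ladder_hopsym[OF assms(1,2,3)]
    opcomm_ladder_hopsym[OF assms(1,2,4)]
  by (auto simp: opmult_scale_left opmult_scale_right opmult_add_left opmult_add_right
      opmult_if_left opmult_if_right opmult_zero_left opmult_zero_right algebra_simps)

section \<open>The trace pairing\<close>

definition trace_pair :: "nat \<Rightarrow> op \<Rightarrow> op \<Rightarrow> complex" where
  "trace_pair L A B = (\<Sum>x\<in>states L. \<Sum>y\<in>states L. A x y * B x y)"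

lemma trace_pair_eq_0: "(\<And>x y. A x y * F x y = 0) \<Longrightarrow> trace_pair L A F = 0"
  unfolding trace_pair_def by (simp only: sum.neutral_const)

lemma trace_pair_add_left:
  "trace_pair L (\<lambda>x y. X x y + Y x y) F = trace_pair L X F + trace_pair L Y F"
  unfolding trace_pair_def by (simp add: algebra_simps sum.distrib)

lemma trace_pair_scale_left: "trace_pair L (\<lambda>x y. c * X x y) F = c * trace_pair L X F"
  unfolding trace_pair_def by (simp add: algebra_simps sum_distrib_left)

lemma trace_pair_if_left:
  "trace_pair L (\<lambda>x y. if c then X x y else 0) F = (if c then trace_pair L X F else 0)"
  unfolding trace_pair_def by simp

lemma trace_pair_sum_left:
  "trace_pair L (\<lambda>x y. \<Sum>j\<in>J. X j x y) F = (\<Sum>j\<in>J. trace_pair L (X j) F)"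
  unfolding trace_pair_def sum_distrib_right by (subst sum.swap, subst (2) sum.swap) simp

lemma trace_pair_scale_right: "trace_pair L A (\<lambda>x y. c * X x y) = c * trace_pair L A X"
  unfolding trace_pair_def by (simp add: algebra_simps sum_distrib_left)

lemma trace_pair_sum_right:
  "trace_pair L A (\<lambda>x y. \<Sum>j\<in>J. X j x y) = (\<Sum>j\<in>J. trace_pair L A (X j))"
  unfolding trace_pair_def sum_distrib_left by (subst sum.swap, subst (2) sum.swap) simp

lemma trace_pair_diff_left: "trace_pair L (\<lambda>x y. X x y - Y x y) F = trace_pair L X F - trace_pair L Y F"
  unfolding trace_pair_def by (simp add: algebra_simps sum_subtractf)

lemma trace_pair_diff_right: "trace_pair L A (\<lambda>x y. X x y - Y x y) = trace_pair L A X - trace_pair L A Y"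
  unfolding trace_pair_def by (simp add: algebra_simps sum_subtractf)

lemma trace_pair_opmult_right: "trace_pair L A (opmult L F M) = trace_pair L (opmult L A (optrans M)) F"
  unfolding trace_pair_def opmult_def optrans_def sum_distrib_left sum_distrib_right
  by (subst (2) sum.swap) (simp add: mult_ac)

lemma trace_pair_opmult_left: "trace_pair L A (opmult L M F) = trace_pair L (opmult L (optrans M) A) F"
  unfolding trace_pair_def opmult_def optrans_def sum_distrib_left sum_distrib_right
  by (subst sum.swap, subst (2 3) sum.swap) (simp add: mult_ac)

lemma trace_pair_opcomm: "trace_pair L A (opcomm L F M) = trace_pair L (opcomm L A (optrans M)) F"
  unfolding opcomm_def trace_pair_diff_left trace_pair_diff_right
  by (simp only: trace_pair_opmult_right[of L A F M] trace_pair_opmult_left[of L A M F])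

definition diagonal_op :: "op \<Rightarrow> bool" where
  "diagonal_op M \<longleftrightarrow> (\<forall>x y. x \<noteq> y \<longrightarrow> M x y = 0)"

lemma opmult_diagonal_right:
  "diagonal_op M \<Longrightarrow> opmult L A M x y = (if y \<in> states L then A x y * M y y else 0)"
  unfolding opmult_def diagonal_op_def by (subst sum_eq_single[where c=y]) (auto simp: finite_states)

lemma opmult_diagonal_left:
  "diagonal_op M \<Longrightarrow> opmult L M A x y = (if x \<in> states L then M x x * A x y else 0)"
  unfolding opmult_def diagonal_op_def by (subst sum_eq_single[where c=x]) (auto simp: finite_states)

lemma trace_pair_opcomm_diagonal:
  assumes "diagonal_op M" "\<And>x y. A x y * F x y = 0"
  shows "trace_pair L (opcomm L A M) F = 0"
proof -
  have "opcomm L A M x y * F x y = 0" for x y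
  proof -
    have "opcomm L A M x y = (if y \<in> states L then A x y * M y y else 0) - (if x \<in> states L then M x x * A x y else 0)"
      using assms(1) unfolding opcomm_def by (simp add: opmult_diagonal_left opmult_diagonal_right)
    then show ?thesis using assms(2)[of x y] by (cases "A x y = 0") auto
  qed
  then show ?thesis by (rule trace_pair_eq_0)
qed

section \<open>Sites on the ring\<close>

definition site_index :: "nat \<Rightarrow> nat \<Rightarrow> nat" where
  "site_index L w = (if w mod L = 0 then L else w mod L)"

lemma site_index_mem: "0 < L \<Longrightarrow> site_index L w \<in> {1..L}"
  unfolding site_index_def by (auto simp: Suc_le_eq)

lemma site_index_eq_self: "i \<in> {1..L} \<Longrightarrow> site_index L i = i"
  unfolding site_index_def by (cases "i = L") auto

lemma site_eq_iff_site_index: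
  assumes "0 < L" "i \<in> {1..L}"
  shows "site L i = site L w \<longleftrightarrow> i = site_index L w"
  using assms mod_less_divisor[OF assms(1), of w] unfolding site_def site_index_def
  by (cases "i = L") auto

lemma site_site_index: "0 < L \<Longrightarrow> site L (site_index L w) = site L w"
  using site_eq_iff_site_index site_index_mem by blast

lemma site_add_cong: "site L i = site L w \<Longrightarrow> site L (i + r) = site L (w + r)"
  unfolding site_def by (metis mod_add_left_eq)

lemma site_add_period: "site L (a + L) = site L a"
  unfolding site_def by simp

lemma site_mem_modes: "0 < L \<Longrightarrow> (site L j, \<tau>) \<in> modes L"
  unfolding site_def modes_def by auto

lemma site_offset_eq:
  assumes "site L a = site L (i + r1)" "site L (a + d) = site L (i + r2)"
    and "r1 + d < r2 + L" "r2 < r1 + d + L"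
  shows "r2 = r1 + d"
proof -
  have "int a mod int L = int (i + r1) mod int L" "int (a + d) mod int L = int (i + r2) mod int L"
    using arg_cong[OF assms(1), of int] arg_cong[OF assms(2), of int] unfolding site_def zmod_int .
  then have "int L dvd int a - int (i + r1)" "int L dvd int (a + d) - int (i + r2)"
    by (simp_all only: mod_eq_dvd_iff)
  then have "int L dvd (int (a + d) - int (i + r2)) - (int a - int (i + r1))"
    by (rule dvd_diff[rotated])
  then have dvd: "int L dvd int r1 + int d - int r2" by (simp add: algebra_simps)
  have bound: "\<bar>int r1 + int d - int r2\<bar> < int L" using assms(3,4) by linarith
  have "int r1 + int d - int r2 = 0"
  proof (rule ccontr)
    assume "int r1 + int d - int r2 \<noteq> 0"
    then have "\<bar>int L\<bar> \<le> \<bar>int r1 + int d - int r2\<bar>" using dvd by (rule dvd_imp_le_int)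
    then show False using bound by simp
  qed
  then show ?thesis by linarith
qed

lemma site_add_inj: "r1 < L \<Longrightarrow> r2 < L \<Longrightarrow> site L (i + r1) = site L (i + r2) \<Longrightarrow> r1 = r2"
  using site_offset_eq[of L "i + r1" i r1 0 r2] by simp

lemma site_ne_site_add: "0 < d \<Longrightarrow> d < L \<Longrightarrow> site L w \<noteq> site L (w + d)"
  using site_add_inj[of 0 L d w] by auto

lemma sum_site_delta:
  assumes "0 < L"
  shows "(\<Sum>j\<in>{1..L}. if site L j = site L c then G j else 0) = G (site_index L c)"
  using site_index_mem[OF assms, of c] site_eq_iff_site_index[OF assms]
  by (subst sum_eq_single[where c="site_index L c"]) auto

lemma site_Suc_eq_iff: "0 < L \<Longrightarrow> site L (j + 1) = site L c \<longleftrightarrow> site L j = site L (c + (L - 1))"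
  using site_add_cong[of L "j + 1" c "L - 1"] site_add_cong[of L j "c + (L - 1)" 1]
  by (simp add: site_add_period) blast

lemma sum_neighbours:
  fixes g :: "mode \<Rightarrow> complex"
  assumes "0 < L"
  shows "(\<Sum>j\<in>{1..L}. \<Sum>\<tau>'\<in>UNIV.
            (if (site L j, \<tau>') = (site L c, \<tau>) then g (site L (j + 1), \<tau>') else 0)
          + (if (site L (j + 1), \<tau>') = (site L c, \<tau>) then g (site L j, \<tau>') else 0))
       = g (site L (c + 1), \<tau>) + g (site L (c + (L - 1)), \<tau>)"
proof -
  have spin_delta: "(\<Sum>\<tau>'\<in>UNIV. if (a, \<tau>') = (b, \<tau>) then f \<tau>' else 0) = (if a = b then f \<tau> else 0)"
    for a b and f :: "bool \<Rightarrow> complex"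
    by (cases \<tau>) (simp_all add: UNIV_bool)
  have "(\<Sum>j\<in>{1..L}. \<Sum>\<tau>'\<in>UNIV.
            (if (site L j, \<tau>') = (site L c, \<tau>) then g (site L (j + 1), \<tau>') else 0)
          + (if (site L (j + 1), \<tau>') = (site L c, \<tau>) then g (site L j, \<tau>') else 0))
      = (\<Sum>j\<in>{1..L}. if site L j = site L c then g (site L (j + 1), \<tau>) else 0)
      + (\<Sum>j\<in>{1..L}. if site L j = site L (c + (L - 1)) then g (site L j, \<tau>) else 0)"
    by (simp only: sum.distrib spin_delta site_Suc_eq_iff[OF assms])
  also have "\<dots> = g (site L (c + 1), \<tau>) + g (site L (c + (L - 1)), \<tau>)"
    unfolding sum_site_delta[OF assms]
    using site_add_cong[OF site_site_index[OF assms, of c], of 1] site_site_index[OF assms] by simp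
  finally show ?thesis .
qed

section \<open>Commuting with the Hamiltonian\<close>

lemma diagonal_numop: "diagonal_op (numop L m)"
  unfolding diagonal_op_def numop_eq by auto

lemma diagonal_idop: "diagonal_op (idop L)"
  unfolding diagonal_op_def idop_def by auto

lemma diagonal_opadd: "diagonal_op A \<Longrightarrow> diagonal_op B \<Longrightarrow> diagonal_op (opadd A B)"
  unfolding diagonal_op_def opadd_def by simp

lemma diagonal_opsmult: "diagonal_op A \<Longrightarrow> diagonal_op (opsmult c A)"
  unfolding diagonal_op_def opsmult_def by simp

lemma diagonal_opmult:
  assumes "diagonal_op A" "diagonal_op B"
  shows "diagonal_op (opmult L A B)"
  using assms(1) by (auto simp: diagonal_op_def opmult_diagonal_right[OF assms(2)])

definition interaction :: "nat \<Rightarrow> nat \<Rightarrow> op" where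
  "interaction L j = opmult L (opadd (numop L (site L j, True)) (opsmult (-1/2) (idop L)))
                              (opadd (numop L (site L j, False)) (opsmult (-1/2) (idop L)))"

lemma diagonal_interaction: "diagonal_op (interaction L j)"
  unfolding interaction_def
  by (intro diagonal_opmult diagonal_opadd diagonal_opsmult diagonal_numop diagonal_idop)

lemma hub_eq: "hub L U = (\<lambda>x y.
    -2 * (\<Sum>j\<in>{1..L}. \<Sum>\<sigma>\<in>UNIV. hopsym L (site L j, \<sigma>) (site L (j + 1), \<sigma>) x y)
  + (4 * complex_of_real U) * (\<Sum>j\<in>{1..L}. interaction L j x y))"
  unfolding hub_def hopsym_def hop_def opadd_def interaction_def by (rule refl)

lemma optrans_hop: "optrans (hop L a b) = hop L b a"
  unfolding hop_def by (simp add: optrans_opmult optrans_cre optrans_ann)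

lemma optrans_hopsym: "optrans (hopsym L a b) = hopsym L a b"
proof (intro ext)
  fix x y
  show "optrans (hopsym L a b) x y = hopsym L a b x y"
    using fun_cong[OF fun_cong[OF optrans_hop[of L a b]], of x y]
      fun_cong[OF fun_cong[OF optrans_hop[of L b a]], of x y]
    unfolding hopsym_def opadd_def optrans_def by simp
qed

lemma optrans_diagonal: "diagonal_op M \<Longrightarrow> optrans M = M"
  unfolding diagonal_op_def optrans_def by (intro ext) (metis)

lemma optrans_hub: "optrans (hub L U) = hub L U"
proof (intro ext)
  fix x y
  have "hopsym L a b y x = hopsym L a b x y" for a b
    using optrans_hopsym[of L a b] unfolding optrans_def by metis
  moreover have "interaction L j y x = interaction L j x y" for j
    using optrans_diagonal[OF diagonal_interaction, of L j] unfolding optrans_def by metis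
  ultimately show "optrans (hub L U) x y = hub L U x y"
    unfolding hub_eq optrans_def by (simp only:)
qed

lemma trace_pair_opcomm_hopping:
  assumes comm: "opmult L F (hub L U) = opmult L (hub L U) F"
    and orth: "\<And>x y. A x y * F x y = 0"
  shows "(\<Sum>j\<in>{1..L}. \<Sum>\<sigma>\<in>UNIV.
           trace_pair L (opcomm L A (hopsym L (site L j, \<sigma>) (site L (j + 1), \<sigma>))) F) = 0"
proof -
  have "0 = trace_pair L A (opcomm L F (hub L U))"
    using comm unfolding opcomm_def trace_pair_def by simp
  also have "\<dots> = trace_pair L (opcomm L A (hub L U)) F"
    by (simp add: trace_pair_opcomm optrans_hub)
  also have "\<dots> = -2 * (\<Sum>j\<in>{1..L}. \<Sum>\<sigma>\<in>UNIV.
           trace_pair L (opcomm L A (hopsym L (site L j, \<sigma>) (site L (j + 1), \<sigma>))) F)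
      + (4 * complex_of_real U) * (\<Sum>j\<in>{1..L}. trace_pair L (opcomm L A (interaction L j)) F)"
    unfolding hub_eq opcomm_lincomb_right opcomm_sum_right trace_pair_add_left trace_pair_scale_left
      trace_pair_sum_left ..
  also have "(\<Sum>j\<in>{1..L}. trace_pair L (opcomm L A (interaction L j)) F) = 0"
    using trace_pair_opcomm_diagonal[OF diagonal_interaction orth] by simp
  finally show ?thesis by simp
qed

lemma trace_pair_opcomm_ladder_pair_hopping:
  assumes L: "0 < L"
  shows "(\<Sum>j\<in>{1..L}. \<Sum>\<tau>\<in>UNIV. trace_pair L (opcomm L (ladder_pair L s (site L c, \<sigma>) (site L c', \<mu>))
            (hopsym L (site L j, \<tau>) (site L (j + 1), \<tau>))) F)
       = (if s then -1 else 1) *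
         ((trace_pair L (ladder_pair L s (site L c, \<sigma>) (site L (c' + 1), \<mu>)) F
         + trace_pair L (ladder_pair L s (site L c, \<sigma>) (site L (c' + (L - 1)), \<mu>)) F)
        + (trace_pair L (ladder_pair L s (site L (c + 1), \<sigma>) (site L c', \<mu>)) F
         + trace_pair L (ladder_pair L s (site L (c + (L - 1)), \<sigma>) (site L c', \<mu>)) F))"
proof -
  define T where "T u v = trace_pair L (ladder_pair L s u v) F" for u v
  define P where "P = (site L c, \<sigma>)"
  define R where "R = (site L c', \<mu>)"
  define sg :: complex where "sg = (if s then -1 else 1)"
  have PR: "P \<in> modes L" "R \<in> modes L"
    unfolding P_def R_def by (simp_all add: site_mem_modes[OF L])
  have hop_term: "trace_pair L (opcomm L (ladder_pair L s P R) (hopsym L a b)) F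
      = sg * (((if a = R then T P b else 0) + (if b = R then T P a else 0))
            + ((if a = P then T b R else 0) + (if b = P then T a R else 0)))"
    if "a \<in> modes L" "b \<in> modes L" for a b
    unfolding opcomm_ladder_pair_hopsym[OF that PR] trace_pair_scale_left trace_pair_add_left
      trace_pair_if_left T_def sg_def by (simp add: algebra_simps)
  have "(\<Sum>j\<in>{1..L}. \<Sum>\<tau>\<in>UNIV.
          trace_pair L (opcomm L (ladder_pair L s P R) (hopsym L (site L j, \<tau>) (site L (j + 1), \<tau>))) F)
      = sg * ((\<Sum>j\<in>{1..L}. \<Sum>\<tau>\<in>UNIV.
              (if (site L j, \<tau>) = R then T P (site L (j + 1), \<tau>) else 0)
            + (if (site L (j + 1), \<tau>) = R then T P (site L j, \<tau>) else 0))
        + (\<Sum>j\<in>{1..L}. \<Sum>\<tau>\<in>UNIV.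
              (if (site L j, \<tau>) = P then T (site L (j + 1), \<tau>) R else 0)
            + (if (site L (j + 1), \<tau>) = P then T (site L j, \<tau>) R else 0)))"
    by (simp only: hop_term site_mem_modes[OF L] sum.distrib sum_distrib_left[symmetric])
  also have "\<dots> = sg * ((T P (site L (c' + 1), \<mu>) + T P (site L (c' + (L - 1)), \<mu>))
                     + (T (site L (c + 1), \<sigma>) R + T (site L (c + (L - 1)), \<sigma>) R))"
    unfolding R_def P_def
    by (simp only: sum_neighbours[OF L, where g="T (site L c, \<sigma>)"]
        sum_neighbours[OF L, where g="\<lambda>u. T u (site L c', \<mu>)"])
  finally show ?thesis unfolding T_def P_def R_def sg_def .
qed

lemma trace_pair_ladder_pair_step:
  assumes L: "0 < L" and k: "1 \<le> k"
    and comm: "opmult L F (hub L U) = opmult L (hub L U) F"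
    and far: "\<And>a d \<tau>1 \<tau>2 x y. d \<in> {k, k + 1} \<Longrightarrow>
               ladder_pair L s (site L a, \<tau>1) (site L (a + d), \<tau>2) x y * F x y = 0"
  shows "trace_pair L (ladder_pair L s (site L w, \<sigma>) (site L (w + (k - 1)), \<mu>)) F
       + trace_pair L (ladder_pair L s (site L (w + 1), \<sigma>) (site L (w + k), \<mu>)) F = 0"
proof -
  define T where "T u v = trace_pair L (ladder_pair L s u v) F" for u v
  \<comment> \<open>The two hops that stretch the pair to range \<open>k + 1\<close> contribute nothing.\<close>
  have far_T: "T (site L a, \<tau>1) (site L (a + (k + 1)), \<tau>2) = 0" for a \<tau>1 \<tau>2
    unfolding T_def by (rule trace_pair_eq_0, rule far) simp
  have "ladder_pair L s (site L w, \<sigma>) (site L (w + k), \<mu>) x y * F x y = 0" for x y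
    by (rule far) simp
  from trace_pair_opcomm_hopping[OF comm this]
  have "(if s then -1 else 1) *
         ((T (site L w, \<sigma>) (site L (w + k + 1), \<mu>) + T (site L w, \<sigma>) (site L (w + k + (L - 1)), \<mu>))
        + (T (site L (w + 1), \<sigma>) (site L (w + k), \<mu>) + T (site L (w + (L - 1)), \<sigma>) (site L (w + k), \<mu>))) = 0"
    unfolding T_def trace_pair_opcomm_ladder_pair_hopping[OF L] .
  moreover have "T (site L w, \<sigma>) (site L (w + k + 1), \<mu>) = 0"
    using far_T[of w \<sigma> \<mu>] by (simp add: add.assoc)
  moreover have "T (site L (w + (L - 1)), \<sigma>) (site L (w + k), \<mu>) = 0"
    using far_T[of "w + (L - 1)" \<sigma> \<mu>] site_add_period[of L "w + k"] L by (simp add: algebra_simps)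
  moreover have "site L (w + k + (L - 1)) = site L (w + (k - 1))"
    using site_add_period[of L "w + (k - 1)"] L k by (simp add: algebra_simps)
  ultimately show ?thesis
    unfolding T_def by (simp add: add.commute split: if_splits)
qed

section \<open>Products of local factors\<close>

definition facprod :: "nat \<Rightarrow> (fac \<times> mode) list \<Rightarrow> op" where
  "facprod L fl = oplist L (map (\<lambda>(f, m). facop L f m) fl)"

definition fac_modes :: "fac \<Rightarrow> (fac \<times> mode) list \<Rightarrow> mode set" where
  "fac_modes f fl = {m. (f, m) \<in> set fl}"

definition drop_z :: "(fac \<times> mode) list \<Rightarrow> (fac \<times> mode) list" where
  "drop_z fl = map (\<lambda>(f, m). (if f = FZ then FI else f, m)) fl"

definition zsign :: "mode \<Rightarrow> mode set \<Rightarrow> complex" where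
  "zsign m y = (if m \<in> y then 1 else -1)"

definition fac_pre :: "fac \<Rightarrow> mode \<Rightarrow> mode set \<Rightarrow> mode set" where
  "fac_pre f m x = (case f of FD \<Rightarrow> x - {m} | FC \<Rightarrow> insert m x | _ \<Rightarrow> x)"

lemma facprod_Nil: "facprod L [] = idop L"
  by (simp add: facprod_def oplist_def)

lemma facprod_Cons: "facprod L ((f, m) # fl) = opmult L (facop L f m) (facprod L fl)"
  by (simp add: facprod_def oplist_def)

lemma zop_eq: "zop L m x y = (if x \<in> states L \<and> x = y then zsign m x else 0)"
  unfolding zop_def opadd_def opsmult_def numop_eq idop_def zsign_def by auto

lemma fock_facop: "fock_op L (facop L f m)"
proof -
  have "fock_op L (zop L m)"
    unfolding fock_op_def zop_eq by simp
  then show ?thesis by (cases f) (simp_all add: facop_def fock_cre fock_ann fock_idop)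
qed

lemma fock_facprod: "fock_op L (facprod L fl)"
  by (induction fl) (auto simp: facprod_Nil facprod_Cons fock_idop intro!: fock_opmult fock_facop)

lemma facprod_append: "facprod L (xs @ ys) = opmult L (facprod L xs) (facprod L ys)"
  by (induction xs) (auto simp: facprod_Nil facprod_Cons opmult_idop_left fock_facprod opmult_assoc)

lemma facprod_filter_FI: "facprod L fl = facprod L (filter (\<lambda>p. fst p \<noteq> FI) fl)"
proof (induction fl)
  case (Cons p fl)
  then show ?case
    by (cases p) (auto simp: facprod_Cons facop_def opmult_idop_left[OF fock_facprod])
qed simp

lemma facop_eq_0: "z \<noteq> fac_pre f m x \<Longrightarrow> facop L f m x z = 0"
  by (cases f) (auto simp: facop_def fac_pre_def idop_def zop_eq cre_def ann_def)

lemma facprod_Cons_pre: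
  "facprod L ((f, m) # fl) x y = facop L f m x (fac_pre f m x) * facprod L fl (fac_pre f m x) y"
proof -
  have "fac_pre f m x \<notin> states L \<Longrightarrow> facop L f m x (fac_pre f m x) = 0"
    using fock_facop unfolding fock_op_def by blast
  then show ?thesis
    unfolding facprod_Cons opmult_def
    by (subst sum_eq_single[where c="fac_pre f m x"]) (auto simp: finite_states facop_eq_0)
qed

lemma facop_pre_square:
  assumes "m \<in> modes L"
  shows "(facop L f m x (fac_pre f m x))\<^sup>2 =
           (if x \<in> states L \<and> (f = FD \<longrightarrow> m \<in> x) \<and> (f = FC \<longrightarrow> m \<notin> x) then 1 else 0)"
proof (cases f)
  case FD
  then show ?thesis
    by (auto simp: facop_def fac_pre_def cre_def states_def power2_eq_square jwsign_square)
next
  case FC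
  then show ?thesis using assms
    by (auto simp: facop_def fac_pre_def ann_def states_def power2_eq_square jwsign_square)
qed (auto simp: facop_def fac_pre_def idop_def zop_eq zsign_def)

lemma fac_modes_Cons: "fac_modes g ((f, m) # fl) = (if f = g then insert m (fac_modes g fl) else fac_modes g fl)"
  unfolding fac_modes_def by auto

lemma facprod_square:
  assumes "distinct (map snd fl)" "snd ` set fl \<subseteq> modes L"
  shows "(facprod L fl x y)\<^sup>2 = (if x \<in> states L \<and> y \<in> states L
           \<and> x - y = fac_modes FD fl \<and> y - x = fac_modes FC fl then 1 else 0)"
  using assms
proof (induction fl arbitrary: x)
  case Nil
  then show ?case by (auto simp: facprod_Nil idop_def fac_modes_def)
next
  case (Cons p fl)
  obtain f m where p: "p = (f, m)" by (cases p)
  have m: "m \<in> modes L" "m \<notin> fac_modes FD fl" "m \<notin> fac_modes FC fl"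
    using Cons.prems unfolding p fac_modes_def by force+
  define z where "z = fac_pre f m x"
  have "(facprod L (p # fl) x y)\<^sup>2 = (facop L f m x z)\<^sup>2 * (facprod L fl z y)\<^sup>2"
    unfolding p facprod_Cons_pre z_def by (simp add: power_mult_distrib)
  also have "\<dots> = (if x \<in> states L \<and> (f = FD \<longrightarrow> m \<in> x) \<and> (f = FC \<longrightarrow> m \<notin> x) then 1 else 0)
      * (if z \<in> states L \<and> y \<in> states L \<and> z - y = fac_modes FD fl \<and> y - z = fac_modes FC fl then 1 else 0)"
    using Cons unfolding p z_def by (simp add: facop_pre_square)
  also have "\<dots> = (if x \<in> states L \<and> y \<in> states L
           \<and> x - y = fac_modes FD (p # fl) \<and> y - x = fac_modes FC (p # fl) then 1 else 0)"
    using m unfolding p z_def fac_modes_Cons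
    by (cases f) (auto simp: fac_pre_def states_def)
  finally show ?case .
qed

lemma facprod_shape:
  assumes "distinct (map snd fl)" "snd ` set fl \<subseteq> modes L" "facprod L fl x y \<noteq> 0"
  shows "x - y = fac_modes FD fl" "y - x = fac_modes FC fl"
  using facprod_square[OF assms(1,2), of x y] assms(3) by (auto split: if_splits)

lemma drop_z_Cons: "drop_z ((f, m) # fl) = (if f = FZ then FI else f, m) # drop_z fl"
  unfolding drop_z_def by simp

lemma facprod_drop_z:
  assumes "distinct (map snd fl)" "snd ` set fl \<subseteq> modes L"
  shows "facprod L fl x y = facprod L (drop_z fl) x y * (\<Prod>m\<in>fac_modes FZ fl. zsign m y)"
  using assms
proof (induction fl arbitrary: x)
  case Nil
  then show ?case by (simp add: drop_z_def fac_modes_def)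
next
  case (Cons p fl)
  obtain f m where p: "p = (f, m)" by (cases p)
  have fl: "distinct (map snd fl)" "snd ` set fl \<subseteq> modes L" using Cons.prems p by auto
  have m: "m \<notin> fac_modes g fl" for g using Cons.prems unfolding p fac_modes_def by force
  have fin: "finite (fac_modes FZ fl)"
    unfolding fac_modes_def by (rule finite_subset[of _ "snd ` set fl"]) force+
  show ?case
  proof (cases "f = FZ")
    case True
    have zs: "zsign m x = zsign m y" if "facprod L fl x y \<noteq> 0"
    proof -
      have "m \<notin> x - y" "m \<notin> y - x" using facprod_shape[OF fl that] m by simp_all
      then show ?thesis unfolding zsign_def by auto
    qed
    then have "facprod L (p # fl) x y = facop L FI m x x * (facprod L fl x y * zsign m y)"
      unfolding p True facprod_Cons_pre
      by (cases "facprod L fl x y = 0") (auto simp: fac_pre_def facop_def zop_eq idop_def)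
    also have "\<dots> = facprod L (drop_z (p # fl)) x y * (\<Prod>m\<in>fac_modes FZ (p # fl). zsign m y)"
      unfolding p True drop_z_Cons facprod_Cons_pre fac_modes_Cons Cons.IH[OF fl]
      by (simp add: fac_pre_def fin m[of FZ] mult_ac)
    finally show ?thesis .
  next
    case False
    then show ?thesis
      unfolding p drop_z_Cons fac_modes_Cons facprod_Cons_pre Cons.IH[OF fl] by simp
  qed
qed

lemma sum_states_shape:
  assumes shape: "\<And>x y. G x y \<noteq> 0 \<Longrightarrow> x - y = D \<and> y - x = C"
    and DC: "D \<inter> C = {}" "D \<union> C \<subseteq> modes L"
  shows "(\<Sum>x\<in>states L. \<Sum>y\<in>states L. G x y) = (\<Sum>u\<in>Pow (modes L - (D \<union> C)). G (u \<union> D) (u \<union> C))"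
proof -
  let ?h = "\<lambda>u. (u \<union> D, u \<union> C)"
  let ?U = "Pow (modes L - (D \<union> C))"
  have inj: "inj_on ?h ?U"
    by (rule inj_onI) blast
  have img: "?h ` ?U \<subseteq> states L \<times> states L"
    using DC unfolding states_def by blast
  have outside: "G x y = 0" if "(x, y) \<in> states L \<times> states L - ?h ` ?U" for x y
  proof (rule ccontr)
    assume "G x y \<noteq> 0"
    with shape have "x - y = D" "y - x = C" by auto
    moreover have "x \<in> states L" using that by blast
    ultimately have "x \<inter> y \<in> ?U" "?h (x \<inter> y) = (x, y)" unfolding states_def by blast+
    with that show False by blast
  qed
  have "(\<Sum>x\<in>states L. \<Sum>y\<in>states L. G x y) = (\<Sum>(x, y)\<in>states L \<times> states L. G x y)"
    by (simp add: sum.cartesian_product)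
  also have "\<dots> = (\<Sum>(x, y)\<in>?h ` ?U. G x y)"
    using outside by (intro sum.mono_neutral_right[OF _ img]) (auto simp: finite_states)
  also have "\<dots> = (\<Sum>u\<in>?U. G (u \<union> D) (u \<union> C))"
    by (simp add: sum.reindex[OF inj])
  finally show ?thesis .
qed

lemma sum_Pow_insert:
  assumes "finite A" "a \<notin> A"
  shows "(\<Sum>u\<in>Pow (insert a A). f u) = (\<Sum>u\<in>Pow A. f u) + (\<Sum>u\<in>Pow A. f (insert a u))"
proof -
  have "Pow A \<inter> insert a ` Pow A = {}" "inj_on (insert a) (Pow A)"
    using assms(2) by (auto simp: inj_on_def)
  then show ?thesis
    unfolding Pow_insert by (simp add: sum.union_disjoint assms(1) sum.reindex)
qed

lemma sum_Pow_prod_zsign: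
  assumes "finite A" "Z \<subseteq> A"
  shows "(\<Sum>u\<in>Pow A. \<Prod>m\<in>Z. zsign m u) = (if Z = {} then 2 ^ card A else 0)"
  using assms
proof (induction A arbitrary: Z rule: finite_induct)
  case empty
  then show ?case by simp
next
  case (insert a A)
  note split = sum_Pow_insert[OF insert.hyps, of "\<lambda>u. \<Prod>m\<in>Z. zsign m u"]
  show ?case
  proof (cases "a \<in> Z")
    case True
    have fin: "finite Z" using insert.prems insert.hyps(1) finite_subset by blast
    have "(\<Prod>m\<in>Z. zsign m u) = - (\<Prod>m\<in>Z - {a}. zsign m u)"
         "(\<Prod>m\<in>Z. zsign m (insert a u)) = (\<Prod>m\<in>Z - {a}. zsign m u)" if "u \<in> Pow A" for u
    proof -
      have "a \<notin> u" using that insert.hyps(2) by auto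
      moreover have "(\<Prod>m\<in>Z - {a}. zsign m (insert a u)) = (\<Prod>m\<in>Z - {a}. zsign m u)"
        by (rule prod.cong) (auto simp: zsign_def)
      ultimately show "(\<Prod>m\<in>Z. zsign m u) = - (\<Prod>m\<in>Z - {a}. zsign m u)"
        "(\<Prod>m\<in>Z. zsign m (insert a u)) = (\<Prod>m\<in>Z - {a}. zsign m u)"
        using fin True by (simp_all add: prod.remove zsign_def)
    qed
    then show ?thesis
      using True unfolding split by (auto simp: sum_negf)
  next
    case False
    have "(\<Prod>m\<in>Z. zsign m (insert a u)) = (\<Prod>m\<in>Z. zsign m u)" for u
      by (rule prod.cong) (use False in \<open>auto simp: zsign_def\<close>)
    moreover have "Z \<subseteq> A" using insert.prems False by auto
    ultimately show ?thesis
      unfolding split using insert.IH insert.hyps by simp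
  qed
qed

lemma fac_modes_subset: "fac_modes f fl \<subseteq> snd ` set fl"
  unfolding fac_modes_def by force

lemma fac_modes_disjoint:
  assumes "distinct (map snd fl)" "f \<noteq> g"
  shows "fac_modes f fl \<inter> fac_modes g fl = {}"
proof -
  have "inj_on snd (set fl)" using assms(1) by (simp add: distinct_map)
  then show ?thesis using assms(2) unfolding fac_modes_def inj_on_def by fastforce
qed

lemma map_snd_drop_z: "map snd (drop_z fl) = map snd fl"
  unfolding drop_z_def by (induction fl) auto

lemma fac_modes_drop_z: "f \<noteq> FZ \<Longrightarrow> f \<noteq> FI \<Longrightarrow> fac_modes f (drop_z fl) = fac_modes f fl"
  unfolding drop_z_def fac_modes_def by force

lemma trace_pair_facprod_drop_z:
  assumes dist: "distinct (map snd fl)" and sub: "snd ` set fl \<subseteq> modes L"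
  shows "trace_pair L (facprod L (drop_z fl)) (facprod L fl) =
           (if fac_modes FZ fl = {} then 2 ^ (2 * L - card (fac_modes FD fl \<union> fac_modes FC fl)) else 0)"
proof -
  define D where "D = fac_modes FD fl"
  define C where "C = fac_modes FC fl"
  define Z where "Z = fac_modes FZ fl"
  define G where "G = facprod L (drop_z fl)"
  have dist': "distinct (map snd (drop_z fl))" and sub': "snd ` set (drop_z fl) \<subseteq> modes L"
    using dist sub map_snd_drop_z[of fl] by (metis, metis set_map)
  have DC': "fac_modes FD (drop_z fl) = D" "fac_modes FC (drop_z fl) = C"
    unfolding D_def C_def by (simp_all add: fac_modes_drop_z)
  have DC: "D \<inter> C = {}" "D \<union> C \<subseteq> modes L"
    unfolding D_def C_def using fac_modes_disjoint[OF dist] fac_modes_subset sub by blast+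
  have ZA: "Z \<subseteq> modes L - (D \<union> C)"
    unfolding D_def C_def Z_def using fac_modes_disjoint[OF dist] fac_modes_subset sub by blast
  \<comment> \<open>Sum over the common part \<open>u\<close> of the two states: the ladder factors give \<open>(\<plusminus>1)\<^sup>2\<close>,
    the \<open>z\<close> factors a character of \<open>u\<close>, which averages to zero unless it is trivial.\<close>
  have "trace_pair L G (facprod L fl) = (\<Sum>x\<in>states L. \<Sum>y\<in>states L. G x y * (G x y * (\<Prod>m\<in>Z. zsign m y)))"
    unfolding trace_pair_def G_def Z_def facprod_drop_z[OF dist sub] ..
  also have "\<dots> = (\<Sum>u\<in>Pow (modes L - (D \<union> C)). G (u \<union> D) (u \<union> C) * (G (u \<union> D) (u \<union> C) * (\<Prod>m\<in>Z. zsign m (u \<union> C))))"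
    using facprod_shape[OF dist' sub'] unfolding DC' G_def by (intro sum_states_shape[OF _ DC]) auto
  also have "\<dots> = (\<Sum>u\<in>Pow (modes L - (D \<union> C)). \<Prod>m\<in>Z. zsign m u)"
  proof (rule sum.cong[OF refl])
    fix u assume u: "u \<in> Pow (modes L - (D \<union> C))"
    then have "(G (u \<union> D) (u \<union> C))\<^sup>2 = 1"
      using DC unfolding G_def facprod_square[OF dist' sub'] DC' states_def by auto
    moreover have "(\<Prod>m\<in>Z. zsign m (u \<union> C)) = (\<Prod>m\<in>Z. zsign m u)"
      using ZA by (intro prod.cong) (auto simp: zsign_def)
    ultimately show "G (u \<union> D) (u \<union> C) * (G (u \<union> D) (u \<union> C) * (\<Prod>m\<in>Z. zsign m (u \<union> C)))
        = (\<Prod>m\<in>Z. zsign m u)"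
      by (simp add: power2_eq_square)
  qed
  also have "\<dots> = (if Z = {} then 2 ^ (2 * L - card (D \<union> C)) else 0)"
    using sum_Pow_prod_zsign[OF finite_Diff[OF finite_modes] ZA]
      card_Diff_subset[OF finite_subset[OF DC(2) finite_modes] DC(2)]
    by (simp add: card_modes)
  finally show ?thesis unfolding G_def D_def C_def Z_def .
qed

lemma trace_pair_facprod_eq_0:
  assumes "distinct (map snd fl1)" "snd ` set fl1 \<subseteq> modes L"
    and "distinct (map snd fl2)" "snd ` set fl2 \<subseteq> modes L"
    and "fac_modes FD fl1 \<noteq> fac_modes FD fl2 \<or> fac_modes FC fl1 \<noteq> fac_modes FC fl2"
  shows "trace_pair L (facprod L fl1) (facprod L fl2) = 0"
proof (rule trace_pair_eq_0)
  fix x y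
  show "facprod L fl1 x y * facprod L fl2 x y = 0"
    using facprod_shape[OF assms(1,2), of x y] facprod_shape[OF assms(3,4), of x y] assms(5) by auto
qed

section \<open>Basis elements\<close>

definition factor_list :: "nat \<Rightarrow> nat \<Rightarrow> (fac \<times> fac) list \<Rightarrow> (fac \<times> mode) list" where
  "factor_list L i cfg = map (\<lambda>r. (fst (cfg ! r), (site L (i + r), True))) [0..<length cfg]
                       @ map (\<lambda>r. (snd (cfg ! r), (site L (i + r), False))) [0..<length cfg]"

definition spin_fac :: "bool \<Rightarrow> fac \<times> fac \<Rightarrow> fac" where
  "spin_fac \<tau> pr = (if \<tau> then fst pr else snd pr)"

definition drop_z_pair :: "fac \<times> fac \<Rightarrow> fac \<times> fac" where
  "drop_z_pair pr = (if fst pr = FZ then FI else fst pr, if snd pr = FZ then FI else snd pr)"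

definition ladder_fac :: "bool \<Rightarrow> fac" where
  "ladder_fac s = (if s then FD else FC)"

lemma ladder_fac_neq [simp]:
  "ladder_fac s \<noteq> FI" "ladder_fac s \<noteq> FZ" "FI \<noteq> ladder_fac s" "FZ \<noteq> ladder_fac s"
  unfolding ladder_fac_def by simp_all

lemma ladder_fac_cases: "f \<noteq> FI \<Longrightarrow> f \<noteq> FZ \<Longrightarrow> f \<noteq> ladder_fac s \<Longrightarrow> f = ladder_fac (\<not> s)"
  unfolding ladder_fac_def by (cases f; cases s) auto

lemma facop_ladder_fac: "facop L (ladder_fac s) m = ladder L s m"
  unfolding facop_def ladder_fac_def ladder_def by simp

lemma fock_ladder: "fock_op L (ladder L s m)"
  unfolding ladder_def by (simp add: fock_cre fock_ann)

lemma ladder_pair_eq_facprod: "ladder_pair L s u v = facprod L [(ladder_fac s, u), (ladder_fac s, v)]"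
  unfolding ladder_pair_def facprod_Cons facprod_Nil facop_ladder_fac opmult_idop_right[OF fock_ladder] ..

lemma belem_eq_facprod: "belem L i cfg = facprod L (factor_list L i cfg)"
  unfolding belem_def factor_list_def facprod_append by (simp add: facprod_def o_def)

lemma factor_list_modes: "0 < L \<Longrightarrow> snd ` set (factor_list L i cfg) \<subseteq> modes L"
  unfolding factor_list_def modes_def site_def by auto

lemma distinct_factor_list:
  assumes "length cfg \<le> L"
  shows "distinct (map snd (factor_list L i cfg))"
proof -
  have "inj_on (\<lambda>r. site L (i + r)) {0..<length cfg}"
    using assms site_add_inj[of _ L] by (auto intro!: inj_onI)
  then show ?thesis unfolding factor_list_def by (auto simp: distinct_map inj_on_def)
qed

lemma fac_modes_factor_list:
  "(s0, \<tau>) \<in> fac_modes f (factor_list L i cfg) \<longleftrightarrow>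
     (\<exists>r<length cfg. s0 = site L (i + r) \<and> spin_fac \<tau> (cfg ! r) = f)"
  unfolding fac_modes_def factor_list_def spin_fac_def by (cases \<tau>) auto

lemma factor_list_site_cong:
  assumes "site L i = site L w"
  shows "factor_list L i cfg = factor_list L w cfg"
  unfolding factor_list_def by (simp only: site_add_cong[OF assms])

lemma drop_z_factor_list: "drop_z (factor_list L i cfg) = factor_list L i (map drop_z_pair cfg)"
  unfolding drop_z_def factor_list_def drop_z_pair_def by auto

lemma pair_eq_iff_spin_fac: "pr = pr' \<longleftrightarrow> (\<forall>\<tau>. spin_fac \<tau> pr = spin_fac \<tau> pr')"
  unfolding spin_fac_def by (metis prod_eq_iff)

lemma spin_fac_drop_z_pair: "spin_fac \<tau> (drop_z_pair pr) = (if spin_fac \<tau> pr = FZ then FI else spin_fac \<tau> pr)"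
  unfolding spin_fac_def drop_z_pair_def by simp

lemma fac_modes_FZ_empty_iff:
  "fac_modes FZ (factor_list L i cfg) = {} \<longleftrightarrow> map drop_z_pair cfg = cfg"
proof -
  have "fac_modes FZ (factor_list L i cfg) = {} \<longleftrightarrow> (\<forall>s0 \<tau>. (s0, \<tau>) \<notin> fac_modes FZ (factor_list L i cfg))"
    by auto
  also have "\<dots> \<longleftrightarrow> (\<forall>r<length cfg. \<forall>\<tau>. spin_fac \<tau> (cfg ! r) \<noteq> FZ)"
    unfolding fac_modes_factor_list by blast
  also have "\<dots> \<longleftrightarrow> map drop_z_pair cfg = cfg"
    unfolding list_eq_iff_nth_eq pair_eq_iff_spin_fac by (auto simp: spin_fac_drop_z_pair)
  finally show ?thesis .
qed

lemma length_qcfg: "2 \<le> k \<Longrightarrow> length (qcfg k \<sigma> \<mu> s) = k"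
  unfolding qcfg_def Let_def by simp

lemma qcfg_mem_cfgs: "2 \<le> k \<Longrightarrow> qcfg k \<sigma> \<mu> s \<in> cfgs k"
  unfolding cfgs_def qcfg_def Let_def by auto

lemma spin_fac_qcfg:
  assumes "2 \<le> k" "r < k"
  shows "spin_fac \<tau> (qcfg k \<sigma> \<mu> s ! r) =
           (if (r = 0 \<and> \<tau> = \<sigma>) \<or> (r = k - 1 \<and> \<tau> = \<mu>) then ladder_fac s else FI)"
proof -
  have q: "qcfg k \<sigma> \<mu> s = ((if \<sigma> then (ladder_fac s, FI) else (FI, ladder_fac s))
      # replicate (k - 2) (FI, FI)) @ [if \<mu> then (ladder_fac s, FI) else (FI, ladder_fac s)]"
    unfolding qcfg_def Let_def ladder_fac_def by simp
  consider "r = 0" | "r = k - 1" | "0 < r \<and> r < k - 1" using assms by linarith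
  then show ?thesis
    using assms unfolding q spin_fac_def
    by cases (auto simp: nth_append nth_Cons' ladder_fac_def)
qed

lemma filter_upt_ends:
  assumes "2 \<le> k"
  shows "filter (\<lambda>r. (r = 0 \<and> a) \<or> (r = k - 1 \<and> b)) [0..<k] = (if a then [0] else []) @ (if b then [k - 1] else [])"
proof -
  obtain m where m: "k = Suc (Suc m)" using assms by (metis add_2_eq_Suc le_Suc_ex)
  have "[0..<k] = [0] @ [1..<k - 1] @ [k - 1]"
    unfolding m by (simp add: upt_conv_Cons)
  moreover have "filter (\<lambda>r. (r = 0 \<and> a) \<or> (r = k - 1 \<and> b)) [1..<k - 1] = []"
    by (auto simp: filter_empty_conv)
  ultimately show ?thesis using assms by simp
qed

text \<open>\<^const>\<open>belem\<close> puts all spin-up factors first, so the two ladder operators of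
  \<^term>\<open>qcfg k \<sigma> \<mu> s\<close> come out in reverse order exactly when \<open>\<sigma>\<close> is down and \<open>\<mu>\<close> is up.\<close>

definition spin_order_sign :: "bool \<Rightarrow> bool \<Rightarrow> complex" where
  "spin_order_sign \<sigma> \<mu> = (if \<not> \<sigma> \<and> \<mu> then -1 else 1)"

lemma belem_qcfg:
  assumes k: "2 \<le> k"
  shows "belem L w (qcfg k \<sigma> \<mu> s) x y =
           spin_order_sign \<sigma> \<mu> * ladder_pair L s (site L w, \<sigma>) (site L (w + (k - 1)), \<mu>) x y"
proof -
  define q where "q = qcfg k \<sigma> \<mu> s"
  define P where "P = (site L w, \<sigma>)"
  define R where "R = (site L (w + (k - 1)), \<mu>)"
  have spin_part: "filter (\<lambda>p. fst p \<noteq> FI) (map (\<lambda>r. (spin_fac \<tau> (q ! r), (site L (w + r), \<tau>))) [0..<k])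
      = (if \<sigma> = \<tau> then [(ladder_fac s, P)] else []) @ (if \<mu> = \<tau> then [(ladder_fac s, R)] else [])" for \<tau>
  proof -
    have "filter (\<lambda>r. spin_fac \<tau> (q ! r) \<noteq> FI) [0..<k] = filter (\<lambda>r. (r = 0 \<and> \<sigma> = \<tau>) \<or> (r = k - 1 \<and> \<mu> = \<tau>)) [0..<k]"
      unfolding q_def by (rule filter_cong) (auto simp: spin_fac_qcfg[OF k])
    then show ?thesis
      unfolding filter_map o_def filter_upt_ends[OF k] using k
      by (auto simp: q_def P_def R_def spin_fac_qcfg[OF k])
  qed
  have "factor_list L w q = map (\<lambda>r. (spin_fac True (q ! r), (site L (w + r), True))) [0..<k]
      @ map (\<lambda>r. (spin_fac False (q ! r), (site L (w + r), False))) [0..<k]"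
    unfolding factor_list_def spin_fac_def q_def length_qcfg[OF k] by simp
  then have "belem L w q = facprod L ((if \<sigma> then [(ladder_fac s, P)] else []) @ (if \<mu> then [(ladder_fac s, R)] else [])
      @ (if \<not> \<sigma> then [(ladder_fac s, P)] else []) @ (if \<not> \<mu> then [(ladder_fac s, R)] else []))"
    unfolding belem_eq_facprod by (subst facprod_filter_FI) (simp add: spin_part)
  then have "belem L w q = (if \<not> \<sigma> \<and> \<mu> then ladder_pair L s R P else ladder_pair L s P R)"
    unfolding ladder_pair_eq_facprod by (cases \<sigma>; cases \<mu>) simp_all
  moreover have "ladder_pair L s R P x y = - ladder_pair L s P R x y"
    using fun_cong[OF fun_cong[OF opacomm_cre_cre]] fun_cong[OF fun_cong[OF opacomm_ann_ann]]
    unfolding ladder_pair_def ladder_def opacomm_def by (cases s) (simp_all add: eq_neg_iff_add_eq_0)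
  ultimately show ?thesis
    unfolding q_def P_def R_def spin_order_sign_def by (cases \<sigma>; cases \<mu>) simp_all
qed

lemma fac_modes_qcfg:
  assumes "2 \<le> k" "f \<noteq> FI"
  shows "fac_modes f (factor_list L w (qcfg k \<sigma> \<mu> s)) =
           (if f = ladder_fac s then {(site L w, \<sigma>), (site L (w + (k - 1)), \<mu>)} else {})"
proof (intro set_eqI)
  fix p :: mode
  obtain s0 \<tau> where p: "p = (s0, \<tau>)" by (cases p)
  have "spin_fac \<tau> (qcfg k \<sigma> \<mu> s ! r) = f \<longleftrightarrow>
      f = ladder_fac s \<and> ((r = 0 \<and> \<tau> = \<sigma>) \<or> (r = k - 1 \<and> \<tau> = \<mu>))" if "r < k" for r
    using spin_fac_qcfg[OF assms(1) that] assms(2) by auto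
  then have "p \<in> fac_modes f (factor_list L w (qcfg k \<sigma> \<mu> s)) \<longleftrightarrow>
      f = ladder_fac s \<and> (\<exists>r<k. s0 = site L (w + r) \<and> ((r = 0 \<and> \<tau> = \<sigma>) \<or> (r = k - 1 \<and> \<tau> = \<mu>)))"
    unfolding p fac_modes_factor_list length_qcfg[OF assms(1)] by blast
  also have "\<dots> \<longleftrightarrow> p \<in> (if f = ladder_fac s then {(site L w, \<sigma>), (site L (w + (k - 1)), \<mu>)} else {})"
    using assms(1) unfolding p by (auto intro: exI[of _ 0] exI[of _ "k - 1"])
  finally show "p \<in> fac_modes f (factor_list L w (qcfg k \<sigma> \<mu> s)) \<longleftrightarrow>
      p \<in> (if f = ladder_fac s then {(site L w, \<sigma>), (site L (w + (k - 1)), \<mu>)} else {})" .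
qed

lemma factor_list_ladder_ends:
  assumes k: "2 \<le> k" "2 * k \<le> L" and len: "length cfg \<le> k"
    and lad: "fac_modes f (factor_list L i cfg) = {(site L w, \<sigma>), (site L (w + (k - 1)), \<mu>)}"
  shows "length cfg = k" "site L i = site L w"
proof -
  have "(site L w, \<sigma>) \<in> fac_modes f (factor_list L i cfg)"
    "(site L (w + (k - 1)), \<mu>) \<in> fac_modes f (factor_list L i cfg)"
    unfolding lad by simp_all
  then obtain r1 r2 where r1: "r1 < length cfg" "site L w = site L (i + r1)"
    and r2: "r2 < length cfg" "site L (w + (k - 1)) = site L (i + r2)"
    unfolding fac_modes_factor_list by blast
  have "r2 = r1 + (k - 1)"
    using site_offset_eq[OF r1(2) r2(2)] r1(1) r2(1) len k by linarith
  then have "r1 = 0" "length cfg = k" using r1 r2 len by linarith+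
  then show "length cfg = k" "site L i = site L w" using r1 by simp_all
qed

lemma factor_list_localize:
  assumes k: "2 \<le> k" "2 * k \<le> L" and len: "length cfg \<le> k"
    and same: "\<And>f. f \<in> {FD, FC} \<Longrightarrow>
                 fac_modes f (factor_list L i cfg) = fac_modes f (factor_list L w (qcfg k \<sigma> \<mu> s))"
  shows "site L i = site L w" "map drop_z_pair cfg = qcfg k \<sigma> \<mu> s"
proof -
  have lad: "fac_modes (ladder_fac s) (factor_list L i cfg) = {(site L w, \<sigma>), (site L (w + (k - 1)), \<mu>)}"
    and other: "fac_modes (ladder_fac (\<not> s)) (factor_list L i cfg) = {}"
    using same[of "ladder_fac s"] same[of "ladder_fac (\<not> s)"] fac_modes_qcfg[OF k(1)]
    by (auto simp: ladder_fac_def)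
  note ends = factor_list_ladder_ends[OF k len lad]
  then show site: "site L i = site L w" by simp
  have site_eq: "site L (i + r) = site L (i + r') \<longleftrightarrow> r = r'" if "r < k" "r' < k" for r r'
    using site_add_inj[of r L r' i] that k by auto
  have lad_pos: "spin_fac \<tau> (cfg ! r) = ladder_fac s \<longleftrightarrow> (r = 0 \<and> \<tau> = \<sigma>) \<or> (r = k - 1 \<and> \<tau> = \<mu>)"
    if "r < k" for r \<tau>
  proof -
    have "spin_fac \<tau> (cfg ! r) = ladder_fac s \<longleftrightarrow> (site L (i + r), \<tau>) \<in> fac_modes (ladder_fac s) (factor_list L i cfg)"
      using that ends(1) site_eq unfolding fac_modes_factor_list by auto
    also have "\<dots> \<longleftrightarrow> (r = 0 \<and> \<tau> = \<sigma>) \<or> (r = k - 1 \<and> \<tau> = \<mu>)"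
      unfolding lad using site_add_cong[OF site, of 0] site_add_cong[OF site, of "k - 1"]
        site_eq[OF that, of 0] site_eq[OF that, of "k - 1"] k by auto
    finally show ?thesis .
  qed
  have no_other: "spin_fac \<tau> (cfg ! r) \<noteq> ladder_fac (\<not> s)" if "r < k" for r \<tau>
    using other that ends(1) fac_modes_factor_list[of "site L (i + r)" \<tau>] by blast
  show "map drop_z_pair cfg = qcfg k \<sigma> \<mu> s"
  proof (rule nth_equalityI)
    show "length (map drop_z_pair cfg) = length (qcfg k \<sigma> \<mu> s)"
      using ends(1) length_qcfg[OF k(1)] by simp
    fix r assume "r < length (map drop_z_pair cfg)"
    then have r: "r < k" using ends(1) by simp
    show "map drop_z_pair cfg ! r = qcfg k \<sigma> \<mu> s ! r"
      unfolding pair_eq_iff_spin_fac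
    proof
      fix \<tau>
      have "spin_fac \<tau> (cfg ! r) \<in> {FI, FZ} \<or> spin_fac \<tau> (cfg ! r) = ladder_fac s"
        using no_other[OF r, of \<tau>] ladder_fac_cases by blast
      then show "spin_fac \<tau> (map drop_z_pair cfg ! r) = spin_fac \<tau> (qcfg k \<sigma> \<mu> s ! r)"
        using lad_pos[OF r, of \<tau>] r ends(1)
        by (auto simp: spin_fac_drop_z_pair spin_fac_qcfg[OF k(1) r])
    qed
  qed
qed

lemma trace_pair_belem_qcfg:
  assumes k: "2 \<le> k" "2 * k \<le> L" and len: "length cfg \<le> k"
  shows "trace_pair L (belem L w (qcfg k \<sigma> \<mu> s)) (belem L i cfg) =
           (if site L i = site L w \<and> cfg = qcfg k \<sigma> \<mu> s then 2 ^ (2 * L - 2) else 0)"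
proof -
  define q where "q = qcfg k \<sigma> \<mu> s"
  define ql where "ql = factor_list L w q"
  define fl where "fl = factor_list L i cfg"
  have L: "0 < L" using k by simp
  have ql: "distinct (map snd ql)" "snd ` set ql \<subseteq> modes L"
    unfolding ql_def q_def using k length_qcfg[OF k(1)]
    by (simp_all add: distinct_factor_list factor_list_modes[OF L])
  have fl: "distinct (map snd fl)" "snd ` set fl \<subseteq> modes L"
    unfolding fl_def using k len by (simp_all add: distinct_factor_list factor_list_modes[OF L])
  show ?thesis
  proof (cases "\<forall>f\<in>{FD, FC}. fac_modes f fl = fac_modes f ql")
    case True
    note loc = factor_list_localize[OF k len True[unfolded fl_def ql_def q_def, rule_format]]
    have drop: "drop_z fl = ql"
      using loc(2) factor_list_site_cong[OF loc(1)] unfolding fl_def ql_def q_def drop_z_factor_list by metis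
    have "site L w \<noteq> site L (w + (k - 1))"
      using site_ne_site_add[of "k - 1" L w] k by simp
    then have "card (fac_modes FD fl \<union> fac_modes FC fl) = 2"
      using True fac_modes_qcfg[OF k(1)] unfolding ql_def q_def by (cases s) (simp_all add: ladder_fac_def)
    moreover have "fac_modes FZ fl = {} \<longleftrightarrow> cfg = q"
      using loc(2) unfolding fl_def fac_modes_FZ_empty_iff q_def by metis
    ultimately show ?thesis
      using trace_pair_facprod_drop_z[OF fl] loc(1)
      unfolding belem_eq_facprod fl_def[symmetric] ql_def[symmetric] q_def[symmetric] drop
      by simp
  next
    case False
    then have "fl \<noteq> ql" by auto
    then have "\<not> (site L i = site L w \<and> cfg = q)"
      unfolding fl_def ql_def using factor_list_site_cong by blast
    then show ?thesis
      using trace_pair_facprod_eq_0[OF ql fl] False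
      unfolding belem_eq_facprod fl_def[symmetric] ql_def[symmetric] q_def[symmetric] by auto
  qed
qed

lemma belem_ladder_pair_far:
  assumes k: "1 \<le> k" "k \<le> d" "d + k \<le> L" and len: "length cfg \<le> k"
  shows "ladder_pair L s (site L a, \<tau>1) (site L (a + d), \<tau>2) x y * belem L i cfg x y = 0"
proof (rule ccontr)
  define pl where "pl = [(ladder_fac s, (site L a, \<tau>1)), (ladder_fac s, (site L (a + d), \<tau>2))]"
  define fl where "fl = factor_list L i cfg"
  assume "ladder_pair L s (site L a, \<tau>1) (site L (a + d), \<tau>2) x y * belem L i cfg x y \<noteq> 0"
  then have nz: "facprod L pl x y \<noteq> 0" "facprod L fl x y \<noteq> 0"
    unfolding pl_def fl_def ladder_pair_eq_facprod belem_eq_facprod by auto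
  have L: "0 < L" using k by simp
  have "site L a \<noteq> site L (a + d)"
    using site_ne_site_add[of d L a] k by simp
  then have pl: "distinct (map snd pl)" "snd ` set pl \<subseteq> modes L"
    unfolding pl_def by (auto simp: site_mem_modes[OF L])
  have fl: "distinct (map snd fl)" "snd ` set fl \<subseteq> modes L"
    unfolding fl_def using k len by (simp_all add: distinct_factor_list factor_list_modes[OF L])
  have "fac_modes f pl = fac_modes f fl" if "f = FD \<or> f = FC" for f
    using facprod_shape[OF pl nz(1)] facprod_shape[OF fl nz(2)] that by auto
  then have "fac_modes (ladder_fac s) pl = fac_modes (ladder_fac s) fl"
    unfolding ladder_fac_def by simp
  then have "(site L a, \<tau>1) \<in> fac_modes (ladder_fac s) fl" "(site L (a + d), \<tau>2) \<in> fac_modes (ladder_fac s) fl"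
    unfolding pl_def fac_modes_def by auto
  then obtain r1 r2 where r: "r1 < length cfg" "site L a = site L (i + r1)"
    "r2 < length cfg" "site L (a + d) = site L (i + r2)"
    unfolding fl_def fac_modes_factor_list by blast
  then have "r2 = r1 + d" using site_offset_eq[OF r(2) r(4)] k len by linarith
  then show False using r len k by linarith
qed

section \<open>Coefficients of the pair operators in F_k\<close>

lemma finite_cfgs: "finite (cfgs l)"
proof -
  have "(UNIV :: fac set) = {FI, FC, FD, FZ}" by (auto intro: fac.exhaust)
  then have "finite (UNIV :: fac set)" by (metis finite.emptyI finite_insert)
  then have "finite {xs :: (fac \<times> fac) list. set xs \<subseteq> UNIV \<and> length xs = l}"
    by (intro finite_lists_length_eq) (simp add: finite_Prod_UNIV)
  then show ?thesis by (rule finite_subset[rotated]) (auto simp: cfgs_def)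
qed

lemma trace_pair_belem_Fk:
  assumes k: "2 \<le> k" "2 * k \<le> L"
  shows "trace_pair L (belem L w (qcfg k \<sigma> \<mu> s)) (Fk L k coef) =
           2 ^ (2 * L - 2) * coef k (site_index L w) (qcfg k \<sigma> \<mu> s)"
proof -
  define q where "q = qcfg k \<sigma> \<mu> s"
  define c :: complex where "c = 2 ^ (2 * L - 2) * coef k (site_index L w) q"
  have L: "0 < L" using k by simp
  have summand: "coef l i cfg * trace_pair L (belem L w q) (belem L i cfg)
      = (if l = k \<and> i = site_index L w \<and> cfg = q then c else 0)"
    if "l \<in> {1..k}" "i \<in> {1..L}" "cfg \<in> cfgs l" for l i cfg
    using that trace_pair_belem_qcfg[OF k, of cfg w \<sigma> \<mu> s i] site_eq_iff_site_index[OF L that(2)]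
      length_qcfg[OF k(1)]
    unfolding q_def c_def cfgs_def by (auto simp: mult.commute)
  have "trace_pair L (belem L w q) (Fk L k coef)
      = (\<Sum>l\<in>{1..k}. \<Sum>i\<in>{1..L}. \<Sum>cfg\<in>cfgs l. if l = k \<and> i = site_index L w \<and> cfg = q then c else 0)"
    unfolding Fk_def trace_pair_sum_right trace_pair_scale_right by (simp add: summand)
  also have "\<dots> = (\<Sum>l\<in>{1..k}. \<Sum>i\<in>{1..L}. if l = k \<and> i = site_index L w then c else 0)"
    using qcfg_mem_cfgs[OF k(1)] unfolding q_def
    by (intro sum.cong refl) (auto simp: finite_cfgs)
  also have "\<dots> = (\<Sum>l\<in>{1..k}. if l = k then c else 0)"
    using site_index_mem[OF L, of w] by (intro sum.cong refl) auto
  also have "\<dots> = c"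
    using k by simp
  finally show ?thesis unfolding q_def c_def .
qed

lemma trace_pair_ladder_pair_Fk:
  assumes k: "2 \<le> k" "2 * k \<le> L"
  shows "trace_pair L (ladder_pair L s (site L w, \<sigma>) (site L (w + (k - 1)), \<mu>)) (Fk L k coef) =
           spin_order_sign \<sigma> \<mu> * 2 ^ (2 * L - 2) * coef k (site_index L w) (qcfg k \<sigma> \<mu> s)"
proof -
  have "ladder_pair L s (site L w, \<sigma>) (site L (w + (k - 1)), \<mu>) =
      (\<lambda>x y. spin_order_sign \<sigma> \<mu> * belem L w (qcfg k \<sigma> \<mu> s) x y)"
    unfolding belem_qcfg[OF k(1)] spin_order_sign_def by (intro ext) simp
  then show ?thesis
    by (simp add: trace_pair_scale_left trace_pair_belem_Fk[OF k] mult.assoc)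
qed

lemma Fk_ladder_pair_far:
  assumes "1 \<le> k" "k \<le> d" "d + k \<le> L"
  shows "ladder_pair L s (site L a, \<tau>1) (site L (a + d), \<tau>2) x y * Fk L k coef x y = 0"
proof -
  have "ladder_pair L s (site L a, \<tau>1) (site L (a + d), \<tau>2) x y * (coef l i cfg * belem L i cfg x y) = 0"
    if "l \<in> {1..k}" "cfg \<in> cfgs l" for l i cfg
  proof -
    have "length cfg \<le> k" using that by (simp add: cfgs_def)
    from belem_ladder_pair_far[OF assms this] show ?thesis by (simp add: mult.left_commute)
  qed
  then show ?thesis
    unfolding Fk_def sum_distrib_left by (intro sum.neutral ballI) simp
qed

lemma coef_qcfg_alternates:
  assumes k: "2 \<le> k" "2 * k + 1 \<le> L"
    and comm: "opmult L (Fk L k coef) (hub L U) = opmult L (hub L U) (Fk L k coef)"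
  shows "coef k (site_index L (w + 1)) (qcfg k \<sigma> \<mu> s) = - coef k (site_index L w) (qcfg k \<sigma> \<mu> s)"
proof -
  have far: "ladder_pair L s (site L a, \<tau>1) (site L (a + d), \<tau>2) x y * Fk L k coef x y = 0"
    if "d \<in> {k, k + 1}" for a d \<tau>1 \<tau>2 x y
    using that k by (intro Fk_ladder_pair_far) auto
  have step: "trace_pair L (ladder_pair L s (site L w, \<sigma>) (site L (w + (k - 1)), \<mu>)) (Fk L k coef)
      + trace_pair L (ladder_pair L s (site L (w + 1), \<sigma>) (site L (w + k), \<mu>)) (Fk L k coef) = 0"
    by (rule trace_pair_ladder_pair_step[OF _ _ comm far]) (use k in simp_all)
  have "w + k = w + 1 + (k - 1)" using k by simp
  then have "trace_pair L (ladder_pair L s (site L w, \<sigma>) (site L (w + (k - 1)), \<mu>)) (Fk L k coef)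
      + trace_pair L (ladder_pair L s (site L (w + 1), \<sigma>) (site L (w + 1 + (k - 1)), \<mu>)) (Fk L k coef) = 0"
    using step by (simp only:)
  moreover have kL: "2 * k \<le> L" using k by simp
  ultimately have "spin_order_sign \<sigma> \<mu> * 2 ^ (2 * L - 2) *
      (coef k (site_index L w) (qcfg k \<sigma> \<mu> s) + coef k (site_index L (w + 1)) (qcfg k \<sigma> \<mu> s)) = 0"
    unfolding trace_pair_ladder_pair_Fk[OF k(1) kL] distrib_left by simp
  moreover have "spin_order_sign \<sigma> \<mu> \<noteq> 0" unfolding spin_order_sign_def by simp
  ultimately show ?thesis by (simp add: add_eq_0_iff)
qed

lemma alternating_eq_power:
  fixes d :: "nat \<Rightarrow> 'a::ring_1"
  assumes "\<And>v. d (Suc v) = - d v"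
  shows "d v = (-1) ^ v * d 0"
  by (induction v) (simp_all add: assms)

theorem lemma6:
  fixes L k :: nat and U :: real
    and coef :: "nat \<Rightarrow> nat \<Rightarrow> (fac \<times> fac) list \<Rightarrow> complex"
  assumes "U \<noteq> 0" and "2 \<le> k" and "k < L div 2"
    and "opmult L (Fk L k coef) (hub L U) = opmult L (hub L U) (Fk L k coef)"
    and "\<exists>i\<in>{1..L}. \<exists>cfg\<in>cfgs k. coef k i cfg \<noteq> 0"
  shows "\<forall>\<sigma> \<mu> s.
           (odd L \<longrightarrow> (\<forall>i\<in>{1..L}. coef k i (qcfg k \<sigma> \<mu> s) = 0)) \<and>
           (even L \<longrightarrow> (\<exists>d. \<forall>i\<in>{1..L}. coef k i (qcfg k \<sigma> \<mu> s) = d * (-1) ^ i))"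
proof (intro allI)
  fix \<sigma> \<mu> s
  define d where "d v = coef k (site_index L v) (qcfg k \<sigma> \<mu> s)" for v
  have k: "2 \<le> k" "2 * k + 1 \<le> L" using assms(2,3) by linarith+
  have alt: "d v = (-1) ^ v * d 0" for v
    by (rule alternating_eq_power) (unfold d_def Suc_eq_plus1, rule coef_qcfg_alternates[OF k assms(4)])
  have "d L = d 0" unfolding d_def site_index_def by simp
  then have odd_0: "odd L \<Longrightarrow> d 0 = 0" using alt[of L] by simp
  have coef_alt: "coef k i (qcfg k \<sigma> \<mu> s) = d 0 * (-1) ^ i" if "i \<in> {1..L}" for i
    using alt[of i] unfolding d_def site_index_eq_self[OF that] by (simp add: mult.commute)
  show "(odd L \<longrightarrow> (\<forall>i\<in>{1..L}. coef k i (qcfg k \<sigma> \<mu> s) = 0)) \<and>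
        (even L \<longrightarrow> (\<exists>d. \<forall>i\<in>{1..L}. coef k i (qcfg k \<sigma> \<mu> s) = d * (-1) ^ i))"
    using coef_alt odd_0 by auto
qed

end
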